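(* Let $X=(X_n:n\ge 0)$ be an irreducible positive recurrent Markov chain on a countable state space $S$ with transition matrix $P$. Let $K\subseteq A\subseteq S$ with $K$ finite and nonempty and $A$ finite, and put $A'=A\setminus K$. Write $P$ in block form with respect to the partition $(K,A',A^c)$ as $P=\begin{pmatrix}P_{11}&P_{12}&P_{13}\\P_{21}&P_{22}&P_{23}\\P_{31}&P_{32}&P_{33}\end{pmatrix}$ (the matrix $I-P_{22}$ is invertible under these hypotheses). Let $B=\begin{pmatrix}P_{22}&P_{23}\\P_{32}&P_{33}\end{pmatrix}$ be the restriction of $P$ to $K^c=A'\cup A^c$. For a non-negative function $w:S\to[0,\infty)$, written as a column vector in block form $w^T=(w_1^T,w_2^T,w_3^T)$, put $\bar w^T=(w_2^T,w_3^T)$ and write $\sum_{n=0}^\infty B^n\bar w=\begin{pmatrix}\eta'(\bar w)\\ \eta(\bar w)\end{pmatrix}$ in block form over $(A',A^c)$. Then $$\kappa(w):=E_{\pi_K}\sum_{j=0}^{T_K-1}w(X_j)=\pi_K\Big[w_1+P_{12}(I-P_{22})^{-1}w_2+P_{13}\eta(\bar w)+P_{12}(I-P_{22})^{-1}P_{23}\eta(\bar w)\Big].$$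
   Context: $P_x$ and $E_x$ denote probability and expectation for the chain started at $X_0=x$; for a distribution $\mu$, $E_\mu=\sum_x\mu(x)E_x$. $T_K=\inf\{n\ge1:X_n\in K\}$ is the return time to $K$. The matrix $P_K=(P_K(x,y):x,y\in K)$ with $P_K(x,y)=P_x(X_{T_K}=y)$ is the transition matrix of the chain watched only on $K$ (the censored chain); it is irreducible and $\pi_K$ denotes its unique stationary distribution (a row vector). Functions are column vectors and distributions row vectors; quantities may take the value $+\infty$. *)

theory Defs
  imports "HOL-Probability.Probability"
begin

definition stochastic :: "('a \<Rightarrow> 'a \<Rightarrow> real) \<Rightarrow> bool" where
  "stochastic P \<longleftrightarrow> (\<forall>x y. 0 \<le> P x y) \<and> (\<forall>x. ((\<lambda>y. P x y) has_sum 1) UNIV)"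

text \<open>M x with process X x is the Markov chain with transition matrix P started at x,
  i.e. its finite-dimensional distributions are the path probabilities.\<close>
definition markov_family ::
  "('a \<Rightarrow> 'w measure) \<Rightarrow> ('a \<Rightarrow> nat \<Rightarrow> 'w \<Rightarrow> 'a) \<Rightarrow> ('a \<Rightarrow> 'a \<Rightarrow> real) \<Rightarrow> bool" where
  "markov_family M X P \<longleftrightarrow>
     (\<forall>x. prob_space (M x)) \<and>
     (\<forall>x n. X x n \<in> measurable (M x) (count_space UNIV)) \<and>
     (\<forall>x n xs. length xs = Suc n \<longrightarrow>
        measure (M x) {\<omega> \<in> space (M x). \<forall>i\<le>n. X x i \<omega> = xs ! i}
        = (if xs ! 0 = x then (\<Prod>i<n. P (xs ! i) (xs ! Suc i)) else 0))"

definition ret_time :: "'a set \<Rightarrow> (nat \<Rightarrow> 'w \<Rightarrow> 'a) \<Rightarrow> 'w \<Rightarrow> enat" where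
  "ret_time K Y \<omega> = (if \<exists>n\<ge>1. Y n \<omega> \<in> K then enat (LEAST n. n \<ge> 1 \<and> Y n \<omega> \<in> K) else \<infinity>)"

definition irreducible_chain ::
  "('a \<Rightarrow> 'w measure) \<Rightarrow> ('a \<Rightarrow> nat \<Rightarrow> 'w \<Rightarrow> 'a) \<Rightarrow> bool" where
  "irreducible_chain M X \<longleftrightarrow>
     (\<forall>x y. \<exists>n. measure (M x) {\<omega> \<in> space (M x). X x n \<omega> = y} > 0)"

definition positive_recurrent ::
  "('a \<Rightarrow> 'w measure) \<Rightarrow> ('a \<Rightarrow> nat \<Rightarrow> 'w \<Rightarrow> 'a) \<Rightarrow> bool" where
  "positive_recurrent M X \<longleftrightarrow>
     (\<forall>x. (\<integral>\<^sup>+ \<omega>. ennreal_of_enat (ret_time {x} (X x) \<omega>) \<partial>M x) < \<infinity>)"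

definition censored ::
  "('a \<Rightarrow> 'w measure) \<Rightarrow> ('a \<Rightarrow> nat \<Rightarrow> 'w \<Rightarrow> 'a) \<Rightarrow> 'a set \<Rightarrow> 'a \<Rightarrow> 'a \<Rightarrow> real" where
  "censored M X K x y = measure (M x)
     {\<omega> \<in> space (M x). ret_time K (X x) \<omega> \<noteq> \<infinity> \<and> X x (the_enat (ret_time K (X x) \<omega>)) \<omega> = y}"

definition stationary_on :: "'a set \<Rightarrow> ('a \<Rightarrow> 'a \<Rightarrow> real) \<Rightarrow> ('a \<Rightarrow> real) \<Rightarrow> bool" where
  "stationary_on K Q \<mu> \<longleftrightarrow> (\<forall>x\<in>K. 0 \<le> \<mu> x) \<and> (\<Sum>x\<in>K. \<mu> x) = 1 \<and>
     (\<forall>y\<in>K. (\<Sum>x\<in>K. \<mu> x * Q x y) = \<mu> y)"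

definition kappa ::
  "('a \<Rightarrow> 'w measure) \<Rightarrow> ('a \<Rightarrow> nat \<Rightarrow> 'w \<Rightarrow> 'a) \<Rightarrow> 'a set \<Rightarrow> ('a \<Rightarrow> real) \<Rightarrow> ('a \<Rightarrow> real) \<Rightarrow> ennreal" where
  "kappa M X K \<mu> w = (\<Sum>x\<in>K. ennreal (\<mu> x) *
     (\<integral>\<^sup>+ \<omega>. (\<Sum>j. if enat j < ret_time K (X x) \<omega> then ennreal (w (X x j \<omega>)) else 0) \<partial>M x))"

definition inv_IminusP :: "'a set \<Rightarrow> ('a \<Rightarrow> 'a \<Rightarrow> real) \<Rightarrow> 'a \<Rightarrow> 'a \<Rightarrow> real" where
  "inv_IminusP A' P = (THE G. (\<forall>x y. (x \<notin> A' \<or> y \<notin> A') \<longrightarrow> G x y = 0) \<and>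
     (\<forall>x\<in>A'. \<forall>y\<in>A'. (\<Sum>z\<in>A'. G x z * ((if z = y then 1 else 0) - P z y)) = (if x = y then 1 else 0)) \<and>
     (\<forall>x\<in>A'. \<forall>y\<in>A'. (\<Sum>z\<in>A'. ((if x = z then 1 else 0) - P x z) * G z y) = (if x = y then 1 else 0)))"

primrec Bpow_w :: "'a set \<Rightarrow> ('a \<Rightarrow> 'a \<Rightarrow> real) \<Rightarrow> ('a \<Rightarrow> real) \<Rightarrow> nat \<Rightarrow> 'a \<Rightarrow> ennreal" where
  "Bpow_w K P w 0 x = ennreal (w x)"
| "Bpow_w K P w (Suc n) x = (\<Sum>\<^sub>\<infinity>z\<in>-K. ennreal (P x z) * Bpow_w K P w n z)"

text \<open>sum_{n\<ge>0} B^n wbar (components indexed by K^c; eta is its A^c block).\<close>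
definition eta_sum :: "'a set \<Rightarrow> ('a \<Rightarrow> 'a \<Rightarrow> real) \<Rightarrow> ('a \<Rightarrow> real) \<Rightarrow> 'a \<Rightarrow> ennreal" where
  "eta_sum K P w x = (\<Sum>n. Bpow_w K P w n x)"

end

theory Submission
  imports Defs
begin

(* Started at x, the chain collects w(X_n) at time n exactly when X_1, ..., X_n avoid K, and path
   probabilities are products of entries of P; hence E_x of the reward before T_K is
   eta(x) = sum_n B^n wbar (x), and kappa(w) = sum_{x in K} pi_K(x) eta(x).
   One step from x gives eta(x) = w(x) + sum_{A'} P(x,y) eta(y) + sum_{A^c} P(x,u) eta(u), so it
   remains to identify eta on A' with (I - P22)^{-1} a, where a = w2 + P23 eta.
   By irreducibility the chain leaves the finite set A' from every state with positive probability,
   so the powers of P22 decay geometrically and the Neumann series G = sum_k P22^k is (I - P22)^{-1}.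
   Since eta = a + P22 eta on A', eta dominates G a; conversely, G a extended by eta off A' is a
   supersolution of the equation eta = w + B eta, of which eta is the least solution. *)

lemma infsum_ennreal_eq_nn_integral:
  fixes f :: "'a \<Rightarrow> ennreal"
  assumes "countable A"
  shows "infsum f A = (\<integral>\<^sup>+x. f x \<partial>count_space A)"
proof (cases "finite A")
  case True
  then show ?thesis by (simp add: nn_integral_count_space_finite)
next
  case False
  have bij: "bij_betw (from_nat_into A) UNIV A"
    using bij_betw_from_nat_into[OF assms False] .
  have "infsum f A = infsum (\<lambda>n. f (from_nat_into A n)) UNIV"
    by (rule infsum_reindex_bij_betw[OF bij, symmetric])
  also have "\<dots> = (\<Sum>n. f (from_nat_into A n))"
    by (rule sums_unique[OF has_sum_imp_sums[OF has_sum_infsum]]) (simp add: nonneg_summable_on_complete)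
  also have "\<dots> = (\<integral>\<^sup>+n. f (from_nat_into A n) \<partial>count_space UNIV)"
    by (rule nn_integral_count_space_nat[symmetric])
  also have "\<dots> = (\<integral>\<^sup>+x. f x \<partial>count_space A)"
    by (rule nn_integral_bij_count_space[OF bij])
  finally show ?thesis .
qed

lemma nn_integral_count_space_split:
  fixes f :: "'a \<Rightarrow> ennreal"
  assumes "K \<subseteq> A" and "finite A"
  shows "(\<integral>\<^sup>+z. f z \<partial>count_space (-K)) = (\<Sum>z\<in>A-K. f z) + (\<integral>\<^sup>+z. f z \<partial>count_space (-A))"
proof -
  have "-K = (A - K) \<union> -A" using assms(1) by auto
  then have "(\<integral>\<^sup>+z. f z \<partial>count_space (-K)) = (\<integral>\<^sup>+z\<in>(A - K) \<union> -A. f z \<partial>count_space UNIV)"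
    by (simp add: nn_integral_count_space_indicator)
  also have "\<dots> = (\<integral>\<^sup>+z\<in>A - K. f z \<partial>count_space UNIV) + (\<integral>\<^sup>+z\<in>-A. f z \<partial>count_space UNIV)"
    by (rule nn_integral_disjoint_pair_countspace) auto
  finally show ?thesis
    using assms(2) by (simp add: nn_integral_count_space_indicator nn_integral_count_space_finite[symmetric])
qed

lemma nn_integral_lists_Suc:
  fixes f :: "'a::countable list \<Rightarrow> ennreal"
  shows "(\<integral>\<^sup>+ys. f ys \<partial>count_space {ys. length ys = Suc n}) =
         (\<integral>\<^sup>+y. (\<integral>\<^sup>+ys. f (y # ys) \<partial>count_space {ys. length ys = n}) \<partial>count_space UNIV)"
proof -
  let ?L = "\<lambda>n. {ys::'a list. length ys = n}"
  have "(\<integral>\<^sup>+ys. f ys \<partial>count_space (?L (Suc n)))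
      = (\<integral>\<^sup>+l. (\<integral>\<^sup>+y. f l * indicator (Cons y ` ?L n) l \<partial>count_space UNIV) \<partial>count_space UNIV)"
  proof (subst nn_integral_count_space_indicator, simp, intro nn_integral_cong)
    fix l :: "'a list"
    show "f l * indicator (?L (Suc n)) l = (\<integral>\<^sup>+y. f l * indicator (Cons y ` ?L n) l \<partial>count_space UNIV)"
    proof (cases l)
      case (Cons a t)
      then show ?thesis
        by (subst nn_integral_count_space'[where A="{a}"]) (auto split: split_indicator)
    qed (simp add: image_iff)
  qed
  also have "\<dots> = (\<integral>\<^sup>+y. (\<integral>\<^sup>+l. f l \<partial>count_space (Cons y ` ?L n)) \<partial>count_space UNIV)"
    by (subst nn_integral_count_space_nn_integral) (auto simp: nn_integral_count_space_indicator)
  also have "\<dots> = (\<integral>\<^sup>+y. (\<integral>\<^sup>+ys. f (y # ys) \<partial>count_space (?L n)) \<partial>count_space UNIV)"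
    by (intro nn_integral_cong nn_integral_bij_count_space[symmetric] bij_betw_imageI) (auto intro: inj_onI)
  finally show ?thesis .
qed

section \<open>Path probabilities of a Markov family\<close>

fun path_weight :: "('a \<Rightarrow> 'a \<Rightarrow> real) \<Rightarrow> 'a \<Rightarrow> 'a list \<Rightarrow> real" where
  "path_weight P x [] = 1"
| "path_weight P x (y # ys) = P x y * path_weight P y ys"

lemma path_weight_nonneg: "(\<And>x y. 0 \<le> P x y) \<Longrightarrow> 0 \<le> path_weight P x ys"
  by (induction ys arbitrary: x) auto

lemma prod_eq_path_weight:
  "(\<Prod>i<length ys. P ((x # ys) ! i) ((x # ys) ! Suc i)) = path_weight P x ys"
  by (induction ys arbitrary: x) (simp_all del: prod.lessThan_Suc add: prod.lessThan_Suc_shift)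

lemma markov_family_prob_space: "markov_family M X P \<Longrightarrow> prob_space (M x)"
  unfolding markov_family_def by auto

lemma markov_family_measurable: "markov_family M X P \<Longrightarrow> X x n \<in> M x \<rightarrow>\<^sub>M count_space UNIV"
  unfolding markov_family_def by auto

lemma markov_family_cylinder:
  "markov_family M X P \<Longrightarrow> length xs = Suc n \<Longrightarrow>
   measure (M x) {\<omega> \<in> space (M x). \<forall>i\<le>n. X x i \<omega> = xs ! i}
     = (if xs ! 0 = x then \<Prod>i<n. P (xs ! i) (xs ! Suc i) else 0)"
  unfolding markov_family_def by auto

lemma AE_markov_family_start:
  assumes "markov_family M X P"
  shows "AE \<omega> in M x. X x 0 \<omega> = x"
proof -
  interpret prob_space "M x" using markov_family_prob_space[OF assms] .
  have "prob {\<omega> \<in> space (M x). X x 0 \<omega> = x} = 1"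
    using markov_family_cylinder[OF assms, of "[x]" 0 x] by simp
  from AE_prob_1[OF this] show ?thesis by eventually_elim auto
qed

definition path_prefix :: "('a \<Rightarrow> nat \<Rightarrow> 'w \<Rightarrow> 'a) \<Rightarrow> 'a \<Rightarrow> nat \<Rightarrow> 'w \<Rightarrow> 'a list" where
  "path_prefix X x n \<omega> = map (\<lambda>i. X x (Suc i) \<omega>) [0..<n]"

lemma last_path_prefix: "X x 0 \<omega> = x \<Longrightarrow> last (x # path_prefix X x n \<omega>) = X x n \<omega>"
  by (cases n) (auto simp: path_prefix_def last_map)

lemma path_prefix_eq_iff:
  "path_prefix X x n \<omega> = ys \<longleftrightarrow> length ys = n \<and> (\<forall>i<n. X x (Suc i) \<omega> = ys ! i)"
  by (auto simp: path_prefix_def list_eq_iff_nth_eq)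

lemma sets_path_prefix_eq:
  assumes "markov_family M X P"
  shows "{\<omega> \<in> space (M x). path_prefix X x n \<omega> = ys} \<in> sets (M x)"
  using markov_family_measurable[OF assms, measurable] unfolding path_prefix_eq_iff by measurable

lemma measurable_path_prefix:
  fixes X :: "'a::countable \<Rightarrow> nat \<Rightarrow> 'w \<Rightarrow> 'a"
  assumes "markov_family M X P"
  shows "path_prefix X x n \<in> M x \<rightarrow>\<^sub>M count_space UNIV"
proof -
  have "path_prefix X x n -` {ys} \<inter> space (M x) = {\<omega> \<in> space (M x). path_prefix X x n \<omega> = ys}" for ys
    by auto
  then show ?thesis
    using sets_path_prefix_eq[OF assms] by (subst measurable_count_space_eq_countable) auto
qed

lemma emeasure_path_prefix_eq:
  assumes mf: "markov_family M X P" and len: "length ys = n"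
  shows "emeasure (M x) {\<omega> \<in> space (M x). path_prefix X x n \<omega> = ys} = ennreal (path_weight P x ys)"
proof -
  interpret prob_space "M x" using markov_family_prob_space[OF mf] .
  note [measurable] = markov_family_measurable[OF mf]
  let ?C = "{\<omega> \<in> space (M x). \<forall>i\<le>n. X x i \<omega> = (x # ys) ! i}"
  have "emeasure (M x) {\<omega> \<in> space (M x). path_prefix X x n \<omega> = ys} = emeasure (M x) ?C"
  proof (rule emeasure_eq_AE)
    show "AE \<omega> in M x. (\<omega> \<in> {\<omega> \<in> space (M x). path_prefix X x n \<omega> = ys}) = (\<omega> \<in> ?C)"
      using AE_markov_family_start[OF mf, of x]
    proof eventually_elim
      case (elim \<omega>)
      have "(\<forall>i<n. X x (Suc i) \<omega> = ys ! i) \<longleftrightarrow> (\<forall>i\<le>n. X x i \<omega> = (x # ys) ! i)"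
        using elim by (simp only: less_Suc_eq_le[symmetric] All_less_Suc2) simp
      then show ?case using len by (auto simp: path_prefix_eq_iff)
    qed
  qed (use sets_path_prefix_eq[OF mf] in auto)
  also have "\<dots> = ennreal (path_weight P x ys)"
    using markov_family_cylinder[OF mf, of "x # ys" n x] len prod_eq_path_weight[of P x ys]
    by (simp add: emeasure_eq_measure)
  finally show ?thesis .
qed

lemma nn_integral_path_prefix:
  fixes X :: "'a::countable \<Rightarrow> nat \<Rightarrow> 'w \<Rightarrow> 'a"
  assumes mf: "markov_family M X P"
  shows "(\<integral>\<^sup>+\<omega>. g (path_prefix X x n \<omega>) \<partial>M x) =
         (\<integral>\<^sup>+ys. g ys * ennreal (path_weight P x ys) \<partial>count_space {ys. length ys = n})"
proof -
  let ?S = "\<lambda>ys. {\<omega> \<in> space (M x). path_prefix X x n \<omega> = ys}"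
  have "(\<integral>\<^sup>+\<omega>. g (path_prefix X x n \<omega>) \<partial>M x) =
        (\<integral>\<^sup>+\<omega>. (\<integral>\<^sup>+ys. g ys * indicator (?S ys) \<omega> \<partial>count_space UNIV) \<partial>M x)"
  proof (intro nn_integral_cong)
    fix \<omega>
    show "g (path_prefix X x n \<omega>) = (\<integral>\<^sup>+ys. g ys * indicator (?S ys) \<omega> \<partial>count_space UNIV)" if "\<omega> \<in> space (M x)"
      using that by (subst nn_integral_count_space'[where A="{path_prefix X x n \<omega>}"]) (auto split: split_indicator)
  qed
  also have "\<dots> = (\<integral>\<^sup>+ys. g ys * emeasure (M x) (?S ys) \<partial>count_space UNIV)"
    using sets_path_prefix_eq[OF mf]
    by (subst nn_integral_count_space_nn_integral) (auto intro!: nn_integral_cong nn_integral_cmult_indicator)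
  also have "\<dots> = (\<integral>\<^sup>+ys. g ys * ennreal (path_weight P x ys) * indicator {ys. length ys = n} ys \<partial>count_space UNIV)"
  proof (intro nn_integral_cong)
    fix ys :: "'a list"
    show "g ys * emeasure (M x) (?S ys) = g ys * ennreal (path_weight P x ys) * indicator {ys. length ys = n} ys"
    proof (cases "length ys = n")
      case True
      then show ?thesis by (simp add: emeasure_path_prefix_eq[OF mf])
    next
      case False
      then show ?thesis by (simp add: path_prefix_eq_iff)
    qed
  qed
  finally show ?thesis
    by (simp add: nn_integral_count_space_indicator)
qed

lemma exists_path_weight_pos:
  fixes X :: "'a::countable \<Rightarrow> nat \<Rightarrow> 'w \<Rightarrow> 'a"
  assumes mf: "markov_family M X P" and Pnn: "\<And>x y. 0 \<le> P x y"
    and pos: "0 < measure (M x) {\<omega> \<in> space (M x). X x n \<omega> = y}"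
  shows "\<exists>ys. length ys = n \<and> last (x # ys) = y \<and> 0 < path_weight P x ys"
proof (rule ccontr)
  assume "\<not> ?thesis"
  then have zero: "path_weight P x ys = 0" if "length ys = n" "last (x # ys) = y" for ys
    using that path_weight_nonneg[of P x ys, OF Pnn] by fastforce
  interpret prob_space "M x" using markov_family_prob_space[OF mf] .
  note [measurable] = markov_family_measurable[OF mf] measurable_path_prefix[OF mf]
  let ?E = "path_prefix X x n -` {ys. last (x # ys) = y} \<inter> space (M x)"
  have E: "?E \<in> sets (M x)" by measurable
  have "emeasure (M x) {\<omega> \<in> space (M x). X x n \<omega> = y} = emeasure (M x) ?E"
    using AE_markov_family_start[OF mf, of x]
    by (intro emeasure_eq_AE) (auto elim!: eventually_mono simp del: last.simps simp: last_path_prefix)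
  also have "\<dots> = (\<integral>\<^sup>+\<omega>. indicator {ys. last (x # ys) = y} (path_prefix X x n \<omega>) \<partial>M x)"
    unfolding nn_integral_indicator[OF E, symmetric] by (rule nn_integral_cong) (auto split: split_indicator)
  also have "\<dots> = (\<integral>\<^sup>+ys. indicator {ys. last (x # ys) = y} ys * ennreal (path_weight P x ys)
                      \<partial>count_space {ys. length ys = n})"
    by (rule nn_integral_path_prefix[OF mf])
  also have "\<dots> = 0"
    by (simp add: nn_integral_0_iff_AE AE_count_space zero split: split_indicator)
  finally show False
    using pos by (simp add: emeasure_eq_measure)
qed

section \<open>Rewards collected before the return to K\<close>

lemma enat_less_ret_time_iff:
  "enat j < ret_time K Y \<omega> \<longleftrightarrow> (\<forall>i<j. Y (Suc i) \<omega> \<notin> K)"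
proof (cases "\<exists>n\<ge>1. Y n \<omega> \<in> K")
  case True
  define L where "L = (LEAST n. n \<ge> 1 \<and> Y n \<omega> \<in> K)"
  have L: "1 \<le> L" "Y L \<omega> \<in> K"
    using LeastI_ex[OF True] by (simp_all add: L_def)
  have L_least: "L \<le> n" if "1 \<le> n" "Y n \<omega> \<in> K" for n
    using that by (simp add: L_def Least_le)
  have "j < L \<longleftrightarrow> (\<forall>i<j. Y (Suc i) \<omega> \<notin> K)"
  proof
    assume "j < L"
    show "\<forall>i<j. Y (Suc i) \<omega> \<notin> K"
    proof (intro allI impI notI)
      fix i assume "i < j" "Y (Suc i) \<omega> \<in> K"
      then have "L \<le> Suc i" by (intro L_least) auto
      with \<open>i < j\<close> \<open>j < L\<close> show False by simp
    qed
  next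
    assume avoid: "\<forall>i<j. Y (Suc i) \<omega> \<notin> K"
    show "j < L"
    proof (rule ccontr)
      assume "\<not> j < L"
      then have "L - 1 < j" and "Suc (L - 1) = L" using L(1) by auto
      then show False using avoid L(2) by metis
    qed
  qed
  then show ?thesis
    using True by (simp add: ret_time_def L_def)
qed (auto simp: ret_time_def)

definition excursion_reward :: "'a set \<Rightarrow> ('a \<Rightarrow> real) \<Rightarrow> 'a \<Rightarrow> 'a list \<Rightarrow> ennreal" where
  "excursion_reward K w x ys = (if set ys \<inter> K = {} then ennreal (w (last (x # ys))) else 0)"

lemma Bpow_w_Suc_eq_nn_integral:
  fixes P :: "'a::countable \<Rightarrow> 'a \<Rightarrow> real"
  shows "Bpow_w K P w (Suc n) x = (\<integral>\<^sup>+z. ennreal (P x z) * Bpow_w K P w n z \<partial>count_space (-K))"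
  by (simp add: infsum_ennreal_eq_nn_integral)

lemma nn_integral_excursion_reward:
  fixes P :: "'a::countable \<Rightarrow> 'a \<Rightarrow> real"
  assumes Pnn: "\<And>x y. 0 \<le> P x y"
  shows "(\<integral>\<^sup>+ys. excursion_reward K w x ys * ennreal (path_weight P x ys) \<partial>count_space {ys. length ys = n})
    = Bpow_w K P w n x"
proof (induction n arbitrary: x)
  case 0
  have "{ys::'a list. length ys = 0} = {[]}" by auto
  then show ?case by (simp add: nn_integral_count_space_finite excursion_reward_def)
next
  case (Suc n)
  have step: "(\<integral>\<^sup>+ys. excursion_reward K w x (z # ys) * ennreal (path_weight P x (z # ys))
                 \<partial>count_space {ys. length ys = n})
      = ennreal (P x z) * Bpow_w K P w n z * indicator (-K) z" for z
  proof (cases "z \<in> K")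
    case False
    then have "(\<integral>\<^sup>+ys. excursion_reward K w x (z # ys) * ennreal (path_weight P x (z # ys))
                 \<partial>count_space {ys. length ys = n})
      = (\<integral>\<^sup>+ys. ennreal (P x z) * (excursion_reward K w z ys * ennreal (path_weight P z ys))
                 \<partial>count_space {ys. length ys = n})"
      using Pnn path_weight_nonneg[of P, OF Pnn]
      by (intro nn_integral_cong) (simp add: excursion_reward_def ennreal_mult mult_ac)
    with False show ?thesis
      by (simp add: nn_integral_cmult Suc.IH)
  qed (simp add: excursion_reward_def)
  show ?case
    unfolding nn_integral_lists_Suc step Bpow_w_Suc_eq_nn_integral
    by (simp add: nn_integral_count_space_indicator)
qed

lemma excursion_reward_path_prefix:
  assumes "X x 0 \<omega> = x"
  shows "(if enat j < ret_time K (X x) \<omega> then ennreal (w (X x j \<omega>)) else 0)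
    = excursion_reward K w x (path_prefix X x j \<omega>)"
proof -
  have "set (path_prefix X x j \<omega>) \<inter> K = {} \<longleftrightarrow> (\<forall>i<j. X x (Suc i) \<omega> \<notin> K)"
    by (force simp: path_prefix_def disjoint_iff)
  then show ?thesis
    using assms by (auto simp add: excursion_reward_def enat_less_ret_time_iff last_path_prefix simp del: last.simps)
qed

lemma nn_integral_excursion_sum:
  fixes X :: "'a::countable \<Rightarrow> nat \<Rightarrow> 'w \<Rightarrow> 'a"
  assumes mf: "markov_family M X P" and Pnn: "\<And>x y. 0 \<le> P x y"
  shows "(\<integral>\<^sup>+\<omega>. (\<Sum>j. if enat j < ret_time K (X x) \<omega> then ennreal (w (X x j \<omega>)) else 0) \<partial>M x)
    = eta_sum K P w x"
proof -
  have "(\<integral>\<^sup>+\<omega>. (\<Sum>j. if enat j < ret_time K (X x) \<omega> then ennreal (w (X x j \<omega>)) else 0) \<partial>M x)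
      = (\<integral>\<^sup>+\<omega>. (\<Sum>j. excursion_reward K w x (path_prefix X x j \<omega>)) \<partial>M x)"
    using AE_markov_family_start[OF mf, of x]
    by (intro nn_integral_cong_AE) (auto elim!: eventually_mono simp: excursion_reward_path_prefix)
  also have "\<dots> = (\<Sum>j. (\<integral>\<^sup>+\<omega>. excursion_reward K w x (path_prefix X x j \<omega>) \<partial>M x))"
    by (rule nn_integral_suminf) (auto intro!: measurable_compose[OF measurable_path_prefix[OF mf]])
  also have "\<dots> = eta_sum K P w x"
    by (simp add: eta_sum_def nn_integral_path_prefix[OF mf] nn_integral_excursion_reward[OF Pnn])
  finally show ?thesis .
qed

lemma kappa_eq_sum_eta_sum:
  fixes X :: "'a::countable \<Rightarrow> nat \<Rightarrow> 'w \<Rightarrow> 'a"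
  assumes "markov_family M X P" and "\<And>x y. 0 \<le> P x y"
  shows "kappa M X K \<mu> w = (\<Sum>x\<in>K. ennreal (\<mu> x) * eta_sum K P w x)"
  unfolding kappa_def using nn_integral_excursion_sum[OF assms] by simp

lemma partial_sum_Bpow_w_Suc:
  fixes P :: "'a::countable \<Rightarrow> 'a \<Rightarrow> real"
  shows "(\<Sum>n<Suc N. Bpow_w K P w n x)
    = ennreal (w x) + (\<integral>\<^sup>+z. ennreal (P x z) * (\<Sum>n<N. Bpow_w K P w n z) \<partial>count_space (-K))"
  by (simp add: sum.lessThan_Suc_shift Bpow_w_Suc_eq_nn_integral nn_integral_sum[symmetric] sum_distrib_left
      del: sum.lessThan_Suc Bpow_w.simps(2))

lemma eta_sum_unfold:
  fixes P :: "'a::countable \<Rightarrow> 'a \<Rightarrow> real"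
  shows "eta_sum K P w x = ennreal (w x) + (\<integral>\<^sup>+z. ennreal (P x z) * eta_sum K P w z \<partial>count_space (-K))"
  using suminf_offset[of "\<lambda>n. Bpow_w K P w n x" 1]
  by (simp add: eta_sum_def Bpow_w_Suc_eq_nn_integral nn_integral_suminf[symmetric] add.commute
      del: Bpow_w.simps(2))

lemma eta_sum_le_supersolution:
  fixes P :: "'a::countable \<Rightarrow> 'a \<Rightarrow> real" and f :: "'a \<Rightarrow> ennreal"
  assumes super: "\<And>x. ennreal (w x) + (\<integral>\<^sup>+z. ennreal (P x z) * f z \<partial>count_space (-K)) \<le> f x"
  shows "eta_sum K P w x \<le> f x"
proof -
  have "(\<Sum>n<N. Bpow_w K P w n x) \<le> f x" for N x
  proof (induction N arbitrary: x)
    case (Suc N)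
    have "(\<Sum>n<Suc N. Bpow_w K P w n x)
        \<le> ennreal (w x) + (\<integral>\<^sup>+z. ennreal (P x z) * f z \<partial>count_space (-K))"
      unfolding partial_sum_Bpow_w_Suc
      using Suc.IH by (intro add_left_mono nn_integral_mono mult_left_mono) auto
    also have "\<dots> \<le> f x" by (rule super)
    finally show ?case .
  qed simp
  then show ?thesis
    unfolding eta_sum_def suminf_eq_SUP by (intro SUP_least)
qed

lemma eta_sum_unfold_split:
  fixes P :: "'a::countable \<Rightarrow> 'a \<Rightarrow> real"
  assumes "K \<subseteq> A" and "finite A"
  shows "eta_sum K P w x = ennreal (w x) + (\<Sum>t\<in>A-K. ennreal (P x t) * eta_sum K P w t)
    + (\<Sum>\<^sub>\<infinity>u\<in>-A. ennreal (P x u) * eta_sum K P w u)"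
  by (subst eta_sum_unfold)
    (simp add: nn_integral_count_space_split[OF assms] infsum_ennreal_eq_nn_integral add.assoc)

section \<open>Powers of a stochastic matrix restricted to a finite set\<close>

lemma stochastic_nonneg: "stochastic P \<Longrightarrow> 0 \<le> P x y"
  unfolding stochastic_def by auto

lemma sum_stochastic_le_one:
  assumes "stochastic P" and "finite F"
  shows "(\<Sum>t\<in>F. P y t) \<le> 1"
proof -
  have sum1: "((\<lambda>t. P y t) has_sum 1) UNIV"
    using assms(1) unfolding stochastic_def by auto
  then have "(\<lambda>t. P y t) summable_on UNIV"
    by (auto simp: summable_on_def)
  have "(\<Sum>t\<in>F. P y t) = infsum (\<lambda>t. P y t) F"
    using assms(2) by simp
  also have "\<dots> \<le> infsum (\<lambda>t. P y t) UNIV"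
    using \<open>(\<lambda>t. P y t) summable_on UNIV\<close> assms(2) stochastic_nonneg[OF assms(1)]
    by (intro infsum_mono_neutral) auto
  also have "\<dots> = 1"
    using sum1 by (rule infsumI)
  finally show ?thesis .
qed

fun matpow_on :: "'a set \<Rightarrow> ('a \<Rightarrow> 'a \<Rightarrow> real) \<Rightarrow> nat \<Rightarrow> 'a \<Rightarrow> 'a \<Rightarrow> real" where
  "matpow_on F Q 0 y z = (if y = z then 1 else 0)"
| "matpow_on F Q (Suc k) y z = (\<Sum>t\<in>F. Q y t * matpow_on F Q k t z)"

lemma matpow_on_nonneg: "(\<And>x y. 0 \<le> Q x y) \<Longrightarrow> 0 \<le> matpow_on F Q k y z"
  by (induction k arbitrary: y) (auto intro!: sum_nonneg)

lemma matpow_on_add: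
  assumes "finite F" and "y \<in> F"
  shows "matpow_on F Q (a + b) y z = (\<Sum>t\<in>F. matpow_on F Q a y t * matpow_on F Q b t z)"
  using assms(2)
proof (induction a arbitrary: y)
  case 0
  then show ?case
    using assms(1) by (simp add: if_distrib[of "\<lambda>c. c * _"] cong: if_cong)
next
  case (Suc a)
  have "matpow_on F Q (Suc a + b) y z = (\<Sum>s\<in>F. \<Sum>t\<in>F. Q y s * matpow_on F Q a s t * matpow_on F Q b t z)"
    using Suc.IH by (simp add: sum_distrib_left mult.assoc)
  also have "\<dots> = (\<Sum>t\<in>F. \<Sum>s\<in>F. Q y s * matpow_on F Q a s t * matpow_on F Q b t z)"
    by (rule sum.swap)
  finally show ?case
    by (simp add: sum_distrib_right)
qed

lemma matpow_on_Suc_right: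
  assumes "finite F" and "y \<in> F" and "z \<in> F"
  shows "matpow_on F Q (Suc k) y z = (\<Sum>t\<in>F. matpow_on F Q k y t * Q t z)"
  using matpow_on_add[OF assms(1,2), of Q k 1 z] assms
  by (simp add: if_distrib[of "\<lambda>c. _ * c"] cong: if_cong)

definition survival :: "'a set \<Rightarrow> ('a \<Rightarrow> 'a \<Rightarrow> real) \<Rightarrow> nat \<Rightarrow> 'a \<Rightarrow> real" where
  "survival F P k y = (\<Sum>z\<in>F. matpow_on F P k y z)"

lemma survival_nonneg:
  assumes "stochastic P"
  shows "0 \<le> survival F P k y"
  unfolding survival_def using stochastic_nonneg[OF assms] by (auto intro!: sum_nonneg matpow_on_nonneg)

lemma survival_Suc: "survival F P (Suc k) y = (\<Sum>t\<in>F. P y t * survival F P k t)"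
proof -
  have "survival F P (Suc k) y = (\<Sum>z\<in>F. \<Sum>t\<in>F. P y t * matpow_on F P k t z)"
    by (simp add: survival_def)
  also have "\<dots> = (\<Sum>t\<in>F. \<Sum>z\<in>F. P y t * matpow_on F P k t z)"
    by (rule sum.swap)
  finally show ?thesis
    by (simp add: survival_def sum_distrib_left)
qed

lemma survival_add:
  assumes "finite F" and "y \<in> F"
  shows "survival F P (a + b) y = (\<Sum>t\<in>F. matpow_on F P a y t * survival F P b t)"
proof -
  have "survival F P (a + b) y = (\<Sum>z\<in>F. \<Sum>t\<in>F. matpow_on F P a y t * matpow_on F P b t z)"
    by (simp add: survival_def matpow_on_add[OF assms])
  also have "\<dots> = (\<Sum>t\<in>F. \<Sum>z\<in>F. matpow_on F P a y t * matpow_on F P b t z)"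
    by (rule sum.swap)
  finally show ?thesis
    by (simp add: survival_def sum_distrib_left)
qed

lemma survival_le_one:
  assumes "stochastic P" and "finite F"
  shows "survival F P k y \<le> 1"
proof (induction k arbitrary: y)
  case 0
  show ?case
    using assms(2) by (simp add: survival_def)
next
  case (Suc k)
  have "survival F P (Suc k) y \<le> (\<Sum>t\<in>F. P y t)"
    unfolding survival_Suc
    by (intro sum_mono mult_right_le_one_le stochastic_nonneg[OF assms(1)] survival_nonneg[OF assms(1)] Suc.IH)
  also have "\<dots> \<le> 1"
    by (rule sum_stochastic_le_one[OF assms])
  finally show ?case .
qed

lemma survival_antimono:
  assumes "stochastic P" and "finite F" and "y \<in> F" and "k \<le> k'"
  shows "survival F P k' y \<le> survival F P k y"
proof -
  have "survival F P (Suc k) y \<le> survival F P k y" if "y \<in> F" for k y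
  proof -
    have "survival F P (k + 1) y \<le> (\<Sum>t\<in>F. matpow_on F P k y t)"
      unfolding survival_add[OF assms(2) that]
      by (intro sum_mono mult_right_le_one_le matpow_on_nonneg stochastic_nonneg[OF assms(1)]
          survival_nonneg[OF assms(1)] survival_le_one[OF assms(1,2)])
    then show ?thesis by (simp add: survival_def)
  qed
  from lift_Suc_antimono_le[of "\<lambda>k. survival F P k y", OF this[OF assms(3)] assms(4)]
  show ?thesis .
qed

lemma survival_less_one_if_exit_path:
  assumes st: "stochastic P" and F: "finite F"
  shows "y \<in> F \<Longrightarrow> 0 < path_weight P y ys \<Longrightarrow> last (y # ys) \<notin> F \<Longrightarrow> survival F P (length ys) y < 1"
proof (induction ys arbitrary: y)
  case (Cons z ys)
  have Pnn: "\<And>x y. 0 \<le> P x y" using stochastic_nonneg[OF st] .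
  have Pyz: "0 < P y z" and weight_z: "0 < path_weight P z ys"
    using Cons.prems(2) Pnn path_weight_nonneg[of P z ys, OF Pnn] by (auto simp: zero_less_mult_iff)
  have le_one: "\<And>k t. survival F P k t \<le> 1" using survival_le_one[OF st F] .
  show ?case
  proof (cases "z \<in> F")
    case False
    have "survival F P (length (z # ys)) y \<le> (\<Sum>t\<in>F. P y t)"
      unfolding length_Cons survival_Suc
      by (intro sum_mono mult_right_le_one_le Pnn survival_nonneg[OF st] le_one)
    also have "\<dots> = (\<Sum>t\<in>insert z F. P y t) - P y z"
      using F False by simp
    also have "\<dots> < 1"
      using sum_stochastic_le_one[OF st, of "insert z F" y] F Pyz by simp
    finally show ?thesis .
  next
    case True
    have IH: "survival F P (length ys) z < 1"
      using Cons.IH[OF True weight_z] Cons.prems(3) by simp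
    have "survival F P (length (z # ys)) y
        = P y z * survival F P (length ys) z + (\<Sum>t\<in>F-{z}. P y t * survival F P (length ys) t)"
      unfolding length_Cons survival_Suc using F True by (simp add: sum.remove)
    also have "\<dots> \<le> P y z * survival F P (length ys) z + (\<Sum>t\<in>F-{z}. P y t)"
      by (intro add_left_mono sum_mono mult_right_le_one_le Pnn survival_nonneg[OF st] le_one)
    also have "\<dots> < P y z + (\<Sum>t\<in>F-{z}. P y t)"
      using IH Pyz by simp
    also have "\<dots> = (\<Sum>t\<in>F. P y t)"
      using F True by (simp add: sum.remove)
    also have "\<dots> \<le> 1"
      by (rule sum_stochastic_le_one[OF st F])
    finally show ?thesis .
  qed
qed simp

lemma survival_less_one_if_irreducible:
  fixes X :: "'a::countable \<Rightarrow> nat \<Rightarrow> 'w \<Rightarrow> 'a"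
  assumes st: "stochastic P" and mf: "markov_family M X P" and irr: "irreducible_chain M X"
    and F: "finite F" and k: "k \<notin> F" and y: "y \<in> F"
  shows "\<exists>n. survival F P n y < 1"
proof -
  obtain n where pos: "0 < measure (M y) {\<omega> \<in> space (M y). X y n \<omega> = k}"
    using irr unfolding irreducible_chain_def by blast
  obtain ys where "last (y # ys) = k" and "0 < path_weight P y ys"
    using exists_path_weight_pos[OF mf stochastic_nonneg[OF st] pos] by blast
  then have "survival F P (length ys) y < 1"
    using survival_less_one_if_exit_path[OF st F y] k by simp
  then show ?thesis ..
qed

lemma survival_le_power:
  assumes st: "stochastic P" and F: "finite F"
    and \<theta>: "0 \<le> \<theta>" "\<And>y. y \<in> F \<Longrightarrow> survival F P N y \<le> \<theta>" and "y \<in> F"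
  shows "survival F P (q * N + r) y \<le> \<theta> ^ q"
  using \<open>y \<in> F\<close>
proof (induction q arbitrary: y)
  case 0
  then show ?case using survival_le_one[OF st F] by simp
next
  case (Suc q)
  have "survival F P (Suc q * N + r) y = (\<Sum>t\<in>F. matpow_on F P N y t * survival F P (q * N + r) t)"
    using survival_add[OF F Suc.prems, of P N "q * N + r"] by (simp add: add.assoc)
  also have "\<dots> \<le> (\<Sum>t\<in>F. matpow_on F P N y t * \<theta> ^ q)"
    using Suc.IH stochastic_nonneg[OF st] by (intro sum_mono mult_left_mono matpow_on_nonneg) auto
  also have "\<dots> = survival F P N y * \<theta> ^ q"
    by (simp add: survival_def sum_distrib_right)
  also have "\<dots> \<le> \<theta> ^ Suc q"
    using \<theta>(2)[OF Suc.prems] \<theta>(1) by (simp add: mult_right_mono)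
  finally show ?case .
qed

lemma survival_geometric_decay:
  assumes st: "stochastic P" and F: "finite F" and escape: "\<forall>y\<in>F. \<exists>n. survival F P n y < 1"
  obtains N \<theta> where "0 < N" and "0 \<le> \<theta>" and "\<theta> < 1"
    and "\<And>k y. y \<in> F \<Longrightarrow> survival F P k y \<le> \<theta> ^ (k div N)"
proof -
  obtain n where n: "\<forall>y\<in>F. survival F P (n y) y < 1"
    using bchoice[OF escape] ..
  define N where "N = Max (insert 1 (n ` F))"
  have N: "0 < N" "\<And>y. y \<in> F \<Longrightarrow> n y \<le> N"
    unfolding N_def using F by (auto intro: Max_ge order.strict_trans2[of 0 1])
  have survival_N: "survival F P N y < 1" if "y \<in> F" for y
  proof -
    have "survival F P N y \<le> survival F P (n y) y"
      by (rule survival_antimono[OF st F that N(2)[OF that]])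
    also have "\<dots> < 1"
      using n that by blast
    finally show ?thesis .
  qed
  define \<theta> where "\<theta> = Max (insert 0 (survival F P N ` F))"
  have \<theta>0: "0 \<le> \<theta>"
    unfolding \<theta>_def using F by (intro Max_ge) auto
  have \<theta>1: "\<theta> < 1"
    unfolding \<theta>_def using F survival_N by (subst Max_less_iff) auto
  have \<theta>_ge: "survival F P N y \<le> \<theta>" if "y \<in> F" for y
    unfolding \<theta>_def using F that by (intro Max_ge) auto
  have "survival F P k y \<le> \<theta> ^ (k div N)" if "y \<in> F" for k y
    using survival_le_power[OF st F \<theta>0 \<theta>_ge that, of "k div N" "k mod N"] by simp
  with N(1) \<theta>0 \<theta>1 show ?thesis
    by (rule that)
qed

lemma summable_if_le_power_div:
  fixes f :: "nat \<Rightarrow> real"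
  assumes f: "\<And>k. 0 \<le> f k" "\<And>k. f k \<le> \<theta> ^ (k div N)"
    and \<theta>: "0 \<le> \<theta>" "\<theta> < 1" and N: "0 < N"
  shows "summable f"
proof -
  define \<theta>' where "\<theta>' = max \<theta> (1/2)"
  define \<rho> where "\<rho> = root N \<theta>'"
  have \<theta>': "0 < \<theta>'" "\<theta>' < 1" "\<theta> \<le> \<theta>'"
    using \<theta> by (auto simp: \<theta>'_def)
  have \<rho>: "0 < \<rho>" "\<rho> < 1" "\<rho> ^ N = \<theta>'"
    unfolding \<rho>_def using N \<theta>' by (simp_all add: real_root_gt_zero)
  have bound: "f k \<le> \<rho> ^ k / \<theta>'" for k
  proof -
    have "\<theta>' \<le> \<rho> ^ (k mod N)"
      using power_decreasing[of "k mod N" N \<rho>] \<rho> N by simp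
    then have "\<theta>' ^ (k div N) * \<theta>' \<le> \<theta>' ^ (k div N) * \<rho> ^ (k mod N)"
      using \<theta>' by (intro mult_left_mono) simp_all
    also have "\<dots> = \<rho> ^ (N * (k div N)) * \<rho> ^ (k mod N)"
      by (simp add: power_mult \<rho>(3))
    also have "\<dots> = \<rho> ^ k"
      by (simp add: power_add[symmetric])
    finally have "\<theta>' ^ (k div N) \<le> \<rho> ^ k / \<theta>'"
      using \<theta>' by (simp add: le_divide_eq)
    moreover have "\<theta> ^ (k div N) \<le> \<theta>' ^ (k div N)"
      using \<theta> \<theta>' by (intro power_mono) auto
    ultimately show ?thesis
      using f(2)[of k] by linarith
  qed
  have "summable (\<lambda>k. \<rho> ^ k / \<theta>')"
    using \<rho> by (intro summable_divide summable_geometric) simp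
  then show ?thesis
    by (rule summable_comparison_test'[where N=0]) (use bound f(1) in auto)
qed

lemma summable_matpow_on:
  assumes st: "stochastic P" and F: "finite F" and escape: "\<forall>y\<in>F. \<exists>n. survival F P n y < 1"
    and "y \<in> F" and "z \<in> F"
  shows "summable (\<lambda>k. matpow_on F P k y z)"
proof -
  obtain N \<theta> where "0 < N" "0 \<le> \<theta>" "\<theta> < 1"
    and decay: "\<And>k y. y \<in> F \<Longrightarrow> survival F P k y \<le> \<theta> ^ (k div N)"
    using survival_geometric_decay[OF st F escape] by blast
  have bound: "matpow_on F P k y z \<le> \<theta> ^ (k div N)" for k
  proof -
    have "matpow_on F P k y z \<le> survival F P k y"
      unfolding survival_def using F \<open>z \<in> F\<close> stochastic_nonneg[OF st]
      by (intro member_le_sum matpow_on_nonneg) auto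
    also have "\<dots> \<le> \<theta> ^ (k div N)"
      by (rule decay[OF \<open>y \<in> F\<close>])
    finally show ?thesis .
  qed
  show ?thesis
    using matpow_on_nonneg[of P, OF stochastic_nonneg[OF st]] bound \<open>0 \<le> \<theta>\<close> \<open>\<theta> < 1\<close> \<open>0 < N\<close>
    by (rule summable_if_le_power_div)
qed

section \<open>The fundamental matrix of a restricted block\<close>

definition green_on :: "'a set \<Rightarrow> ('a \<Rightarrow> 'a \<Rightarrow> real) \<Rightarrow> 'a \<Rightarrow> 'a \<Rightarrow> real" where
  "green_on F Q y z = (\<Sum>k. matpow_on F Q k y z)"

context
  fixes F :: "'a set" and Q :: "'a \<Rightarrow> 'a \<Rightarrow> real"
  assumes finite_F: "finite F"
    and summable_F: "\<And>y z. y \<in> F \<Longrightarrow> z \<in> F \<Longrightarrow> summable (\<lambda>k. matpow_on F Q k y z)"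
begin

lemma green_on_eq_left:
  assumes y: "y \<in> F" and z: "z \<in> F"
  shows "green_on F Q y z = (if y = z then 1 else 0) + (\<Sum>t\<in>F. Q y t * green_on F Q t z)"
proof -
  have "(\<Sum>t\<in>F. Q y t * green_on F Q t z) = (\<Sum>t\<in>F. \<Sum>k. Q y t * matpow_on F Q k t z)"
    unfolding green_on_def using summable_F z by (intro sum.cong refl suminf_mult[symmetric]) auto
  also have "\<dots> = (\<Sum>k. \<Sum>t\<in>F. Q y t * matpow_on F Q k t z)"
    using summable_F z by (intro suminf_sum[symmetric] summable_mult) auto
  also have "\<dots> = (\<Sum>k. matpow_on F Q (Suc k) y z)"
    by simp
  finally show ?thesis
    using suminf_split_head[OF summable_F[OF y z]] by (simp add: green_on_def)
qed

lemma green_on_eq_right: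
  assumes y: "y \<in> F" and z: "z \<in> F"
  shows "green_on F Q y z = (if y = z then 1 else 0) + (\<Sum>t\<in>F. green_on F Q y t * Q t z)"
proof -
  have "(\<Sum>t\<in>F. green_on F Q y t * Q t z) = (\<Sum>t\<in>F. \<Sum>k. matpow_on F Q k y t * Q t z)"
    unfolding green_on_def using summable_F y by (intro sum.cong refl suminf_mult2) auto
  also have "\<dots> = (\<Sum>k. \<Sum>t\<in>F. matpow_on F Q k y t * Q t z)"
    using summable_F y by (intro suminf_sum[symmetric] summable_mult2) auto
  also have "\<dots> = (\<Sum>k. matpow_on F Q (Suc k) y z)"
    using matpow_on_Suc_right[OF finite_F y z] by simp
  finally show ?thesis
    using suminf_split_head[OF summable_F[OF y z]] by (simp add: green_on_def)
qed

lemma green_on_right_inverse: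
  assumes "x \<in> F" and "y \<in> F"
  shows "(\<Sum>z\<in>F. green_on F Q x z * ((if z = y then 1 else 0) - Q z y)) = (if x = y then 1 else 0)"
  using green_on_eq_right[OF assms] finite_F assms(2)
  by (simp add: right_diff_distrib sum_subtractf if_distrib[of "\<lambda>c. _ * c"] cong: if_cong)

lemma green_on_left_inverse:
  assumes "x \<in> F" and "y \<in> F"
  shows "(\<Sum>z\<in>F. ((if x = z then 1 else 0) - Q x z) * green_on F Q z y) = (if x = y then 1 else 0)"
  using green_on_eq_left[OF assms] finite_F assms(1)
  by (simp add: left_diff_distrib sum_subtractf if_distrib[of "\<lambda>c. c * _"] cong: if_cong)

lemma inv_IminusP_eq_green_on:
  "inv_IminusP F Q = (\<lambda>y z. if y \<in> F \<and> z \<in> F then green_on F Q y z else 0)" (is "_ = ?G")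
  unfolding inv_IminusP_def
proof (rule the_equality)
  show "(\<forall>x y. (x \<notin> F \<or> y \<notin> F) \<longrightarrow> ?G x y = 0) \<and>
    (\<forall>x\<in>F. \<forall>y\<in>F. (\<Sum>z\<in>F. ?G x z * ((if z = y then 1 else 0) - Q z y)) = (if x = y then 1 else 0)) \<and>
    (\<forall>x\<in>F. \<forall>y\<in>F. (\<Sum>z\<in>F. ((if x = z then 1 else 0) - Q x z) * ?G z y) = (if x = y then 1 else 0))"
    using green_on_right_inverse green_on_left_inverse by (simp cong: sum.cong)
next
  fix G assume G: "(\<forall>x y. (x \<notin> F \<or> y \<notin> F) \<longrightarrow> G x y = 0) \<and>
    (\<forall>x\<in>F. \<forall>y\<in>F. (\<Sum>z\<in>F. G x z * ((if z = y then 1 else 0) - Q z y)) = (if x = y then 1 else 0)) \<and>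
    (\<forall>x\<in>F. \<forall>y\<in>F. (\<Sum>z\<in>F. ((if x = z then 1 else 0) - Q x z) * G z y) = (if x = y then 1 else 0))"
  have "G x y = green_on F Q x y" if x: "x \<in> F" and y: "y \<in> F" for x y
  proof -
    have "G x y = (\<Sum>z\<in>F. G x z * (\<Sum>t\<in>F. ((if z = t then 1 else 0) - Q z t) * green_on F Q t y))"
      using green_on_left_inverse[OF _ y] finite_F y by (simp add: if_distrib[of "\<lambda>c. _ * c"] cong: if_cong)
    also have "\<dots> = (\<Sum>t\<in>F. \<Sum>z\<in>F. G x z * ((if z = t then 1 else 0) - Q z t) * green_on F Q t y)"
      by (subst sum.swap) (simp add: sum_distrib_left mult.assoc)
    also have "\<dots> = (\<Sum>t\<in>F. (if x = t then 1 else 0) * green_on F Q t y)"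
      using G x by (simp add: sum_distrib_right[symmetric])
    also have "\<dots> = green_on F Q x y"
      using finite_F x by (simp add: if_distrib[of "\<lambda>c. c * _"] cong: if_cong)
    finally show ?thesis .
  qed
  with G show "G = ?G"
    by (auto simp: fun_eq_iff)
qed

lemma green_on_nonneg:
  assumes "\<And>x y. 0 \<le> Q x y" and "y \<in> F" and "z \<in> F"
  shows "0 \<le> green_on F Q y z"
  unfolding green_on_def using assms summable_F by (intro suminf_nonneg matpow_on_nonneg) auto

lemma ennreal_green_on_eq_left:
  assumes Qnn: "\<And>x y. 0 \<le> Q x y" and y: "y \<in> F" and z: "z \<in> F"
  shows "ennreal (green_on F Q y z)
    = ennreal (if y = z then 1 else 0) + (\<Sum>t\<in>F. ennreal (Q y t) * ennreal (green_on F Q t z))"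
proof -
  have G: "0 \<le> green_on F Q t z" if "t \<in> F" for t
    using green_on_nonneg[OF Qnn that z] .
  have "ennreal (\<Sum>t\<in>F. Q y t * green_on F Q t z) = (\<Sum>t\<in>F. ennreal (Q y t) * ennreal (green_on F Q t z))"
    using Qnn G by (simp add: sum_ennreal[symmetric] ennreal_mult del: sum_ennreal)
  moreover have "0 \<le> (\<Sum>t\<in>F. Q y t * green_on F Q t z)"
    using Qnn G by (simp add: sum_nonneg)
  ultimately show ?thesis
    by (subst green_on_eq_left[OF y z]) (simp add: ennreal_plus)
qed

lemma green_on_solution:
  fixes a :: "'a \<Rightarrow> ennreal"
  assumes Qnn: "\<And>x y. 0 \<le> Q x y" and y: "y \<in> F"
  shows "(\<Sum>z\<in>F. ennreal (green_on F Q y z) * a z)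
    = a y + (\<Sum>t\<in>F. ennreal (Q y t) * (\<Sum>z\<in>F. ennreal (green_on F Q t z) * a z))"
proof -
  have "(\<Sum>z\<in>F. ennreal (green_on F Q y z) * a z)
      = (\<Sum>z\<in>F. ennreal (if y = z then 1 else 0) * a z)
        + (\<Sum>z\<in>F. \<Sum>t\<in>F. ennreal (Q y t) * (ennreal (green_on F Q t z) * a z))"
    using ennreal_green_on_eq_left[OF Qnn y]
    by (simp add: distrib_right sum.distrib sum_distrib_right mult.assoc)
  also have "(\<Sum>z\<in>F. ennreal (if y = z then 1 else 0) * a z) = a y"
    using finite_F y by (simp add: if_distrib[of ennreal] if_distrib[of "\<lambda>c. c * _"] cong: if_cong)
  also have "(\<Sum>z\<in>F. \<Sum>t\<in>F. ennreal (Q y t) * (ennreal (green_on F Q t z) * a z))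
      = (\<Sum>t\<in>F. ennreal (Q y t) * (\<Sum>z\<in>F. ennreal (green_on F Q t z) * a z))"
    by (subst sum.swap) (simp add: sum_distrib_left)
  finally show ?thesis .
qed

lemma partial_neumann_sum_Suc:
  fixes a :: "'a \<Rightarrow> ennreal"
  assumes Qnn: "\<And>x y. 0 \<le> Q x y" and y: "y \<in> F"
  shows "(\<Sum>k<Suc N. \<Sum>z\<in>F. ennreal (matpow_on F Q k y z) * a z)
    = a y + (\<Sum>t\<in>F. ennreal (Q y t) * (\<Sum>k<N. \<Sum>z\<in>F. ennreal (matpow_on F Q k t z) * a z))"
proof -
  have ennreal_matpow_Suc: "ennreal (matpow_on F Q (Suc k) y z)
      = (\<Sum>t\<in>F. ennreal (Q y t) * ennreal (matpow_on F Q k t z))" for k z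
    using Qnn matpow_on_nonneg[of Q, OF Qnn]
    by (simp add: sum_ennreal[symmetric] ennreal_mult del: sum_ennreal)
  have "(\<Sum>k<N. \<Sum>z\<in>F. ennreal (matpow_on F Q (Suc k) y z) * a z)
      = (\<Sum>k<N. \<Sum>z\<in>F. \<Sum>t\<in>F. ennreal (Q y t) * (ennreal (matpow_on F Q k t z) * a z))"
    by (simp only: ennreal_matpow_Suc sum_distrib_right mult.assoc)
  also have "\<dots> = (\<Sum>t\<in>F. ennreal (Q y t) * (\<Sum>k<N. \<Sum>z\<in>F. ennreal (matpow_on F Q k t z) * a z))"
    by (subst sum.swap, subst (2) sum.swap) (simp add: sum_distrib_left)
  finally show ?thesis
    using finite_F y
    by (simp add: sum.lessThan_Suc_shift if_distrib[of ennreal] if_distrib[of "\<lambda>c. c * _"]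
        del: sum.lessThan_Suc cong: if_cong)
qed

lemma green_on_le_supersolution:
  fixes a f :: "'a \<Rightarrow> ennreal"
  assumes Qnn: "\<And>x y. 0 \<le> Q x y"
    and super: "\<And>y. y \<in> F \<Longrightarrow> a y + (\<Sum>t\<in>F. ennreal (Q y t) * f t) \<le> f y"
    and y: "y \<in> F"
  shows "(\<Sum>z\<in>F. ennreal (green_on F Q y z) * a z) \<le> f y"
proof -
  have partial: "(\<Sum>k<N. \<Sum>z\<in>F. ennreal (matpow_on F Q k y z) * a z) \<le> f y" if "y \<in> F" for N y
    using that
  proof (induction N arbitrary: y)
    case (Suc N)
    have "(\<Sum>k<Suc N. \<Sum>z\<in>F. ennreal (matpow_on F Q k y z) * a z) \<le> a y + (\<Sum>t\<in>F. ennreal (Q y t) * f t)"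
      unfolding partial_neumann_sum_Suc[OF Qnn Suc.prems]
      using Suc.IH by (intro add_left_mono sum_mono mult_left_mono) auto
    also have "\<dots> \<le> f y"
      by (rule super[OF Suc.prems])
    finally show ?case .
  qed simp
  have "(\<Sum>z\<in>F. ennreal (green_on F Q y z) * a z) = (\<Sum>z\<in>F. \<Sum>k. ennreal (matpow_on F Q k y z) * a z)"
    unfolding green_on_def using summable_F y matpow_on_nonneg[of Q, OF Qnn]
    by (intro sum.cong refl) (simp add: suminf_ennreal2)
  also have "\<dots> = (\<Sum>k. \<Sum>z\<in>F. ennreal (matpow_on F Q k y z) * a z)"
    by (rule suminf_sum[symmetric]) (rule summableI)
  also have "\<dots> \<le> f y"
    unfolding suminf_eq_SUP using partial y by (intro SUP_least)
  finally show ?thesis .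
qed

end

section \<open>Decomposition of the reward at the finite set A\<close>

(* On A - K this is the vector w2 + P23 eta of the block decomposition. *)
definition eta_source :: "'a set \<Rightarrow> 'a set \<Rightarrow> ('a \<Rightarrow> 'a \<Rightarrow> real) \<Rightarrow> ('a \<Rightarrow> real) \<Rightarrow> 'a \<Rightarrow> ennreal" where
  "eta_source K A P w z = ennreal (w z) + (\<Sum>\<^sub>\<infinity>u\<in>-A. ennreal (P z u) * eta_sum K P w u)"

lemma eta_sum_eq_eta_source:
  fixes P :: "'a::countable \<Rightarrow> 'a \<Rightarrow> real"
  assumes "K \<subseteq> A" and "finite A"
  shows "eta_sum K P w x = eta_source K A P w x + (\<Sum>t\<in>A - K. ennreal (P x t) * eta_sum K P w t)"
  unfolding eta_source_def by (subst eta_sum_unfold_split[OF assms]) (simp only: ac_simps)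

context
  fixes P :: "'a::countable \<Rightarrow> 'a \<Rightarrow> real" and K A :: "'a set"
  assumes Pnn: "\<And>x y. 0 \<le> P x y" and KA: "K \<subseteq> A" and A: "finite A"
    and summable: "\<And>y z. y \<in> A - K \<Longrightarrow> z \<in> A - K \<Longrightarrow> summable (\<lambda>k. matpow_on (A - K) P k y z)"
begin

lemma green_on_eta_source_le_eta_sum:
  assumes "y \<in> A - K"
  shows "(\<Sum>z\<in>A - K. ennreal (green_on (A - K) P y z) * eta_source K A P w z) \<le> eta_sum K P w y"
  using A eq_refl[OF eta_sum_eq_eta_source[OF KA A, symmetric]]
  by (intro green_on_le_supersolution[OF _ summable Pnn _ assms]) auto

lemma eta_sum_le_green_on_eta_source:
  assumes y: "y \<in> A - K"
  shows "eta_sum K P w y \<le> (\<Sum>z\<in>A - K. ennreal (green_on (A - K) P y z) * eta_source K A P w z)"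
proof -
  define g where "g x = (\<Sum>z\<in>A - K. ennreal (green_on (A - K) P x z) * eta_source K A P w z)" for x
  define f where "f x = (if x \<in> A - K then g x else eta_sum K P w x)" for x
  have "eta_sum K P w y \<le> f y"
  proof (rule eta_sum_le_supersolution)
    fix x
    have "(\<integral>\<^sup>+u. ennreal (P x u) * f u \<partial>count_space (-A)) = (\<Sum>\<^sub>\<infinity>u\<in>-A. ennreal (P x u) * eta_sum K P w u)"
      by (auto simp: infsum_ennreal_eq_nn_integral f_def intro!: nn_integral_cong)
    moreover have "(\<Sum>t\<in>A - K. ennreal (P x t) * f t) = (\<Sum>t\<in>A - K. ennreal (P x t) * g t)"
      by (rule sum.cong) (simp_all add: f_def)
    ultimately have "ennreal (w x) + (\<integral>\<^sup>+z. ennreal (P x z) * f z \<partial>count_space (-K))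
        = eta_source K A P w x + (\<Sum>t\<in>A - K. ennreal (P x t) * g t)"
      by (simp add: nn_integral_count_space_split[OF KA A] eta_source_def ac_simps)
    also have "\<dots> \<le> f x"
    proof (cases "x \<in> A - K")
      case True
      have "g x = eta_source K A P w x + (\<Sum>t\<in>A - K. ennreal (P x t) * g t)"
        unfolding g_def using A by (intro green_on_solution[OF _ summable Pnn True]) simp
      with True show ?thesis
        by (simp add: f_def)
    next
      case False
      have "eta_source K A P w x + (\<Sum>t\<in>A - K. ennreal (P x t) * g t)
          \<le> eta_source K A P w x + (\<Sum>t\<in>A - K. ennreal (P x t) * eta_sum K P w t)"
        unfolding g_def using green_on_eta_source_le_eta_sum
        by (intro add_left_mono sum_mono mult_left_mono) auto
      also have "\<dots> = f x"
        using False unfolding f_def by (simp only: if_False eta_sum_eq_eta_source[OF KA A, symmetric])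
      finally show ?thesis .
    qed
    finally show "ennreal (w x) + (\<integral>\<^sup>+z. ennreal (P x z) * f z \<partial>count_space (-K)) \<le> f x" .
  qed
  with y show ?thesis
    by (simp add: f_def g_def)
qed

lemma eta_sum_eq_inv_IminusP:
  assumes w: "\<And>x. 0 \<le> w x" and y: "y \<in> A - K"
  shows "eta_sum K P w y = ennreal (\<Sum>z\<in>A - K. inv_IminusP (A - K) P y z * w z)
    + (\<Sum>z\<in>A - K. ennreal (inv_IminusP (A - K) P y z) * (\<Sum>\<^sub>\<infinity>u\<in>-A. ennreal (P z u) * eta_sum K P w u))"
proof -
  let ?G = "green_on (A - K) P y" and ?c = "\<lambda>z. \<Sum>\<^sub>\<infinity>u\<in>-A. ennreal (P z u) * eta_sum K P w u"
  have fin: "finite (A - K)"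
    using A by simp
  have G: "0 \<le> ?G z" if "z \<in> A - K" for z
    using green_on_nonneg[OF fin summable Pnn y that] .
  have inv: "inv_IminusP (A - K) P y z = ?G z" if "z \<in> A - K" for z
    using inv_IminusP_eq_green_on[OF fin summable] y that by simp
  have "eta_sum K P w y = (\<Sum>z\<in>A - K. ennreal (?G z) * eta_source K A P w z)"
    using green_on_eta_source_le_eta_sum[OF y] eta_sum_le_green_on_eta_source[OF y] by (rule antisym[rotated])
  also have "\<dots> = (\<Sum>z\<in>A - K. ennreal (?G z) * ennreal (w z)) + (\<Sum>z\<in>A - K. ennreal (?G z) * ?c z)"
    by (simp add: eta_source_def distrib_left sum.distrib)
  also have "(\<Sum>z\<in>A - K. ennreal (?G z) * ennreal (w z)) = (\<Sum>z\<in>A - K. ennreal (?G z * w z))"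
    using G w by (intro sum.cong refl ennreal_mult[symmetric]) auto
  also have "\<dots> = ennreal (\<Sum>z\<in>A - K. ?G z * w z)"
    using G w by (intro sum_ennreal mult_nonneg_nonneg) auto
  also have "(\<Sum>z\<in>A - K. ?G z * w z) = (\<Sum>z\<in>A - K. inv_IminusP (A - K) P y z * w z)"
    by (rule sum.cong) (simp_all add: inv)
  also have "(\<Sum>z\<in>A - K. ennreal (?G z) * ?c z) = (\<Sum>z\<in>A - K. ennreal (inv_IminusP (A - K) P y z) * ?c z)"
    by (rule sum.cong) (simp_all add: inv)
  finally show ?thesis .
qed

end

lemma summable_matpow_on_if_irreducible:
  fixes X :: "'a::countable \<Rightarrow> nat \<Rightarrow> 'w \<Rightarrow> 'a"
  assumes "stochastic P" and "markov_family M X P" and "irreducible_chain M X"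
    and "finite F" and "k \<notin> F" and "y \<in> F" and "z \<in> F"
  shows "summable (\<lambda>n. matpow_on F P n y z)"
  using survival_less_one_if_irreducible[OF assms(1-5)] assms(6,7)
  by (intro summable_matpow_on[OF assms(1,4)]) auto

theorem theorem2p1:
  fixes P :: "'a::countable \<Rightarrow> 'a \<Rightarrow> real"
    and M :: "'a \<Rightarrow> 'w measure" and X :: "'a \<Rightarrow> nat \<Rightarrow> 'w \<Rightarrow> 'a"
    and K A :: "'a set" and w piK :: "'a \<Rightarrow> real"
  assumes "stochastic P"
    and "markov_family M X P"
    and "irreducible_chain M X"
    and "positive_recurrent M X"
    and "K \<subseteq> A" and "finite A" and "K \<noteq> {}"
    and "\<forall>x. 0 \<le> w x"
    and "stationary_on K (censored M X K) piK"
  shows "kappa M X K piK w =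
    (\<Sum>x\<in>K. ennreal (piK x) *
       (ennreal (w x)
        + (\<Sum>y\<in>A - K. ennreal (P x y) *
              ennreal (\<Sum>z\<in>A - K. inv_IminusP (A - K) P y z * w z))
        + (\<Sum>\<^sub>\<infinity>u\<in>-A. ennreal (P x u) * eta_sum K P w u)
        + (\<Sum>y\<in>A - K. ennreal (P x y) *
              (\<Sum>z\<in>A - K. ennreal (inv_IminusP (A - K) P y z) *
                 (\<Sum>\<^sub>\<infinity>u\<in>-A. ennreal (P z u) * eta_sum K P w u)))))"
proof -
  have Pnn: "\<And>x y. 0 \<le> P x y"
    using stochastic_nonneg[OF assms(1)] .
  obtain k where "k \<notin> A - K"
    using assms(7) by blast
  have summable: "summable (\<lambda>n. matpow_on (A - K) P n y z)" if "y \<in> A - K" "z \<in> A - K" for y z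
    using assms(6) by (intro summable_matpow_on_if_irreducible[OF assms(1-3) _ \<open>k \<notin> A - K\<close> that]) simp
  let ?c = "\<lambda>z. \<Sum>\<^sub>\<infinity>u\<in>-A. ennreal (P z u) * eta_sum K P w u"
  have eta_sum_x: "eta_sum K P w x = ennreal (w x)
      + (\<Sum>y\<in>A - K. ennreal (P x y) * ennreal (\<Sum>z\<in>A - K. inv_IminusP (A - K) P y z * w z))
      + ?c x + (\<Sum>y\<in>A - K. ennreal (P x y) * (\<Sum>z\<in>A - K. ennreal (inv_IminusP (A - K) P y z) * ?c z))"
    for x
  proof -
    have "eta_sum K P w x = ennreal (w x) + (\<Sum>y\<in>A - K. ennreal (P x y) * eta_sum K P w y) + ?c x"
      by (rule eta_sum_unfold_split[OF assms(5,6)])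
    also have "(\<Sum>y\<in>A - K. ennreal (P x y) * eta_sum K P w y)
        = (\<Sum>y\<in>A - K. ennreal (P x y) * (ennreal (\<Sum>z\<in>A - K. inv_IminusP (A - K) P y z * w z)
            + (\<Sum>z\<in>A - K. ennreal (inv_IminusP (A - K) P y z) * ?c z)))"
      using assms(8)
      by (intro sum.cong refl arg_cong2[where f = "(*)"] eta_sum_eq_inv_IminusP[OF Pnn assms(5,6) summable]) auto
    finally show ?thesis
      by (simp only: distrib_left sum.distrib add_ac)
  qed
  show ?thesis
    unfolding kappa_eq_sum_eta_sum[OF assms(2) Pnn] by (intro sum.cong refl arg_cong2[where f = "(*)"] eta_sum_x)
qed

end
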